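(* Let $A$ be a nontrivial closed class of decision tables from $\mathcal M_2^\infty$ and $\psi$ a bounded complexity measure. If the function $G_{\psi,A}$ is not everywhere defined, then the function $\mathcal H^\infty_{\psi,A}$ is not everywhere defined.
   Context: Notation: $\omega=\{0,1,2,\dots\}$; $\mathcal P(\omega)$ is the set of nonempty finite subsets of $\omega$; $E_2=\{0,1\}$. $P=\{f_i:i\in\omega\}$ is a set of attributes, $f_i\neq f_j$ for $i\ne j$. Decision tables: $\mathcal M_2^\infty$ is the set of rectangular tables filled with numbers from $E_2$, whose columns are labeled with pairwise different attributes from $P$, whose rows are pairwise different, and each row of which is labeled with a set from $\mathcal P(\omega)$ (its set of decisions). The empty table (no rows) is denoted $\Lambda$ and belongs to $\mathcal M_2^\infty$. For $T\in\mathcal M_2^\infty$: $\Pi(T)$ is the intersection of the decision sets of all rows (common decisions); $\mathrm{At}(T)$ is the set of attributes labeling columns. For nonempty $T$, $\Omega_2(T)$ is the set of finite words (including the empty word $\lambda$) over the alphabet $\{(f_i,\delta):f_i\in\mathrm{At}(T),\delta\in E_2\}$; for $\alpha=(f_{i_1},\delta_1)\cdots(f_{i_m},\delta_m)$, $T\alpha$ is the subtable of $T$ consisting of the rows having value $\delta_j$ in the column $f_{i_j}$ for all $j$, and $T\lambda=T$. Operations: for $D\subseteq\mathrm{At}(T)$, $I(D,T)$ is obtained from $T$ by deleting the columns labeled with attributes from $D$ and, in each group of rows coinciding on the remaining columns, keeping only the first row; $I(\mathrm{At}(T),T)=\Lambda$. For $\nu:E_2^{|\mathrm{At}(T)|}\to\mathcal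 P(\omega)$, $J(\nu,T)$ is obtained by replacing the decision set of each row $\bar\delta$ by $\nu(\bar\delta)$. $[T]=\{J(\nu,I(D,T)):D\subseteq\mathrm{At}(T),\ \nu:E_2^{|\mathrm{At}(T)\setminus D|}\to\mathcal P(\omega)\}$; for nonempty $A\subseteq\mathcal M_2^\infty$, $[A]=\bigcup_{T\in A}[T]$. $A$ is a closed class if $[A]=A$; nontrivial if it contains a nonempty table. Decision trees: a $2$-decision tree is a finite directed rooted tree with at least two nodes in which the root and the edges leaving the root are unlabeled, each terminal node is labeled with a decision from $\omega$, and each other node is labeled with an attribute from $P$, each edge leaving such a node being labeled with a number from $E_2$. $\mathrm{At}(\Gamma)$ is the set of attributes labeling nodes of $\Gamma$. For a complete path $\tau=v_1,d_1,\dots,v_m,d_m,v_{m+1}$ (from the root to a terminal node), $\pi(\tau)=\lambda$ if $m=1$, and otherwise $\pi(\tau)=(f_{i_2},\delta_2)\cdots(f_{i_m},\delta_m)$ where $v_j$ is labeled $f_{i_j}$ and $d_j$ is labeled $\delta_j$; $T(\tau)=T\pi(\tau)$. For $T\ne\Lambda$, a nondeterministic decision tree for $T$ is a $2$-decision tree $\Gamma$ with $\mathrm{At}(\Gamma)\subseteq\mathrm{At}(T)$ such that every row of $T$ belongs to $T(\tau)$ for some complete path $\tau$, and for every complete path $\tau$ either $T(\tau)=\Lambda$ or the decision at the terminal node of $\tau$ belongs to $\Pi(T(\tau))$. A deterministic decision tree for $T$ is a nondeterministic decision tree for $T$ in which, additionally, exactly one edge leaves the root and the edges leaving any node that is neither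 the root nor terminal are labeled with pairwise different numbers. Complexity measures: a partially bounded complexity measure is a function $\psi:P^*\to\omega$ on finite words over $P$ such that for all words $\alpha_1,\alpha_2$: $\psi(\alpha_1)=0$ iff $\alpha_1=\lambda$; $\psi(\alpha_1)$ is invariant under permutation of letters; $\psi(\alpha_1)\le\psi(\alpha_1\alpha_2)$; $\psi(\alpha_1\alpha_2)\le\psi(\alpha_1)+\psi(\alpha_2)$. It is bounded if in addition $\psi(\alpha)\ge|\alpha|$ for all $\alpha$. $\psi$ is extended to words $(f_{i_1},\delta_1)\cdots(f_{i_m},\delta_m)$ by $\psi(f_{i_1}\cdots f_{i_m})$ ($\psi(\lambda)=0$). For a $2$-decision tree $\Gamma$, $\psi(\Gamma)=\max_\tau\psi(\pi(\tau))$ over complete paths. For $T\ne\Lambda$, $\psi^d(T)$ (resp. $\psi^a(T)$) is the minimum of $\psi(\Gamma)$ over deterministic (resp. nondeterministic) decision trees $\Gamma$ for $T$; $\psi^d(\Lambda)=\psi^a(\Lambda)=0$. Parameters: $m_\psi(T)=\max\{\psi(f_i):f_i\in\mathrm{At}(T)\}$, $m_\psi(\Lambda)=0$. A word $\alpha\in\Omega_2(T)$ is annihilating for $T$ if $T\alpha=\Lambda$ and $\alpha$ contains no two letters $(f_i,\delta),(f_i,\sigma)$ with $\delta\ne\sigma$; it is irreducible if no word obtained from $\alpha$ by deleting some (at least one) letters is annihilating for $T$; $G(T)$ is the maximum length of an irreducible annihilating word for $T$ if one exists, and $0$ otherwise; $G(\Lambda)=0$. For $n\in\omega$: $A_\psi(n)=\{T\in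 A:m_\psi(T)\le n\}$; $G_{\psi,A}(n)$ is undefined if $\{G(T):T\in A_\psi(n)\}$ is infinite, else its maximum; $\mathcal H^\infty_{\psi,A}(n)$ is undefined if $\{\psi^d(T):T\in A,\psi^a(T)\le n\}$ is infinite, else its maximum. *)

theory Defs
  imports Main "HOL-Library.Multiset" "HOL-Library.Sublist"
begin

text \<open>Attribute f_i is represented by the natural number i; values of E_2 are the
naturals 0 and 1. A table is a pair (list of column attributes, list of rows), each
row being a pair (value vector, set of decisions). The order of rows is kept
(the operation I keeps the first row of each group).\<close>

type_synonym table = "nat list \<times> (nat list \<times> nat set) list"

definition Lambda :: table where "Lambda = ([], [])"

definition wf_table :: "table \<Rightarrow> bool" where
  "wf_table T \<longleftrightarrow> distinct (fst T) \<and> distinct (map fst (snd T)) \<and>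
     (\<forall>(r, d) \<in> set (snd T). length r = length (fst T) \<and> set r \<subseteq> {0, 1}
        \<and> d \<noteq> {} \<and> finite d) \<and>
     (snd T = [] \<longleftrightarrow> fst T = [])"

definition M2 :: "table set" where "M2 = {T. wf_table T}"

definition At :: "table \<Rightarrow> nat set" where "At T = set (fst T)"

definition Pi :: "table \<Rightarrow> nat set" where "Pi T = (\<Inter>(r, d) \<in> set (snd T). d)"

definition entry :: "nat list \<Rightarrow> nat list \<Rightarrow> nat \<Rightarrow> nat" where
  "entry cs r f = the (map_of (zip cs r) f)"

type_synonym word = "(nat \<times> nat) list"

definition Omega2 :: "table \<Rightarrow> word set" where
  "Omega2 T = {\<alpha>. \<forall>(f, \<delta>) \<in> set \<alpha>. f \<in> At T \<and> \<delta> \<in> {0, 1}}"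

definition sat :: "nat list \<Rightarrow> nat list \<Rightarrow> word \<Rightarrow> bool" where
  "sat cs r \<alpha> \<longleftrightarrow> (\<forall>(f, \<delta>) \<in> set \<alpha>. entry cs r f = \<delta>)"

text \<open>the subtable T alpha (normalised to Lambda when it has no rows)\<close>
definition sub :: "table \<Rightarrow> word \<Rightarrow> table" where
  "sub T \<alpha> = (let rs = filter (\<lambda>(r, d). sat (fst T) r \<alpha>) (snd T)
              in if rs = [] then Lambda else (fst T, rs))"

definition Idel :: "nat set \<Rightarrow> table \<Rightarrow> table" where
  "Idel D T = (let cs = fst T; rs = snd T; cs' = filter (\<lambda>f. f \<notin> D) cs;
                   pr = (\<lambda>r. map (entry cs r) cs')
    in if cs' = [] then Lambda
       else (cs', [(pr (fst (rs ! i)), snd (rs ! i)).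
                     i \<leftarrow> [0..<length rs], \<forall>j<i. pr (fst (rs ! j)) \<noteq> pr (fst (rs ! i))]))"

definition Jrep :: "(nat list \<Rightarrow> nat set) \<Rightarrow> table \<Rightarrow> table" where
  "Jrep \<nu> T = (fst T, map (\<lambda>(r, d). (r, \<nu> r)) (snd T))"

definition closure1 :: "table \<Rightarrow> table set" where
  "closure1 T = {Jrep \<nu> (Idel D T) | D \<nu>. D \<subseteq> At T \<and>
      (\<forall>v. length v = card (At T - D) \<and> set v \<subseteq> {0, 1} \<longrightarrow> \<nu> v \<noteq> {} \<and> finite (\<nu> v))}"

definition closure :: "table set \<Rightarrow> table set" where
  "closure A = (\<Union>T \<in> A. closure1 T)"

definition closed_class :: "table set \<Rightarrow> bool" where
  "closed_class A \<longleftrightarrow> A \<noteq> {} \<and> A \<subseteq> M2 \<and> closure A = A"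

definition nontrivial :: "table set \<Rightarrow> bool" where
  "nontrivial A \<longleftrightarrow> (\<exists>T \<in> A. T \<noteq> Lambda)"

text \<open>A non-root node: a terminal node labeled with a decision, or a node labeled with
an attribute with a list of outgoing edges (edge label, subtree). A 2-decision tree is
the (nonempty) list of subtrees hanging from the unlabeled root.\<close>

datatype dnode = Leaf nat | Node nat "(nat \<times> dnode) list"

type_synonym dtree = "dnode list"

inductive wf_node :: "dnode \<Rightarrow> bool" where
  "wf_node (Leaf d)"
| "cs \<noteq> [] \<Longrightarrow> (\<And>\<delta> c. (\<delta>, c) \<in> set cs \<Longrightarrow> \<delta> \<in> {0, 1} \<and> wf_node c) \<Longrightarrow> wf_node (Node f cs)"

inductive det_node :: "dnode \<Rightarrow> bool" where
  "det_node (Leaf d)"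
| "distinct (map fst cs) \<Longrightarrow> (\<And>\<delta> c. (\<delta>, c) \<in> set cs \<Longrightarrow> det_node c) \<Longrightarrow> det_node (Node f cs)"

inductive node_attr :: "dnode \<Rightarrow> nat \<Rightarrow> bool" where
  "node_attr (Node f cs) f"
| "(\<delta>, c) \<in> set cs \<Longrightarrow> node_attr c g \<Longrightarrow> node_attr (Node f cs) g"

inductive node_path :: "dnode \<Rightarrow> word \<Rightarrow> nat \<Rightarrow> bool" where
  "node_path (Leaf d) [] d"
| "(\<delta>, c) \<in> set cs \<Longrightarrow> node_path c w d \<Longrightarrow> node_path (Node f cs) ((f, \<delta>) # w) d"

definition wf_tree :: "dtree \<Rightarrow> bool" where
  "wf_tree \<Gamma> \<longleftrightarrow> \<Gamma> \<noteq> [] \<and> (\<forall>c \<in> set \<Gamma>. wf_node c)"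

definition tree_At :: "dtree \<Rightarrow> nat set" where
  "tree_At \<Gamma> = {f. \<exists>c \<in> set \<Gamma>. node_attr c f}"

text \<open>complete paths tau of Gamma, given by (pi(tau), decision at the terminal node)\<close>
definition tree_path :: "dtree \<Rightarrow> word \<Rightarrow> nat \<Rightarrow> bool" where
  "tree_path \<Gamma> w d \<longleftrightarrow> (\<exists>c \<in> set \<Gamma>. node_path c w d)"

definition nondet_tree_for :: "table \<Rightarrow> dtree \<Rightarrow> bool" where
  "nondet_tree_for T \<Gamma> \<longleftrightarrow> wf_tree \<Gamma> \<and> tree_At \<Gamma> \<subseteq> At T \<and>
     (\<forall>row \<in> set (snd T). \<exists>w d. tree_path \<Gamma> w d \<and> row \<in> set (snd (sub T w))) \<and>
     (\<forall>w d. tree_path \<Gamma> w d \<longrightarrow> sub T w = Lambda \<or> d \<in> Pi (sub T w))"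

definition det_tree_for :: "table \<Rightarrow> dtree \<Rightarrow> bool" where
  "det_tree_for T \<Gamma> \<longleftrightarrow> nondet_tree_for T \<Gamma> \<and> length \<Gamma> = 1 \<and> (\<forall>c \<in> set \<Gamma>. det_node c)"

definition partially_bounded_measure :: "(nat list \<Rightarrow> nat) \<Rightarrow> bool" where
  "partially_bounded_measure \<psi> \<longleftrightarrow>
     (\<forall>\<alpha>. \<psi> \<alpha> = 0 \<longleftrightarrow> \<alpha> = []) \<and>
     (\<forall>\<alpha> \<beta>. mset \<alpha> = mset \<beta> \<longrightarrow> \<psi> \<alpha> = \<psi> \<beta>) \<and>
     (\<forall>\<alpha> \<beta>. \<psi> \<alpha> \<le> \<psi> (\<alpha> @ \<beta>)) \<and>
     (\<forall>\<alpha> \<beta>. \<psi> (\<alpha> @ \<beta>) \<le> \<psi> \<alpha> + \<psi> \<beta>)"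

definition bounded_measure :: "(nat list \<Rightarrow> nat) \<Rightarrow> bool" where
  "bounded_measure \<psi> \<longleftrightarrow> partially_bounded_measure \<psi> \<and> (\<forall>\<alpha>. length \<alpha> \<le> \<psi> \<alpha>)"

definition psi_word :: "(nat list \<Rightarrow> nat) \<Rightarrow> word \<Rightarrow> nat" where
  "psi_word \<psi> w = \<psi> (map fst w)"

definition psi_tree :: "(nat list \<Rightarrow> nat) \<Rightarrow> dtree \<Rightarrow> nat" where
  "psi_tree \<psi> \<Gamma> = Max {psi_word \<psi> w | w d. tree_path \<Gamma> w d}"

definition psi_d :: "(nat list \<Rightarrow> nat) \<Rightarrow> table \<Rightarrow> nat" where
  "psi_d \<psi> T = (if T = Lambda then 0
     else (LEAST n. \<exists>\<Gamma>. det_tree_for T \<Gamma> \<and> psi_tree \<psi> \<Gamma> = n))"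

definition psi_a :: "(nat list \<Rightarrow> nat) \<Rightarrow> table \<Rightarrow> nat" where
  "psi_a \<psi> T = (if T = Lambda then 0
     else (LEAST n. \<exists>\<Gamma>. nondet_tree_for T \<Gamma> \<and> psi_tree \<psi> \<Gamma> = n))"

definition m_psi :: "(nat list \<Rightarrow> nat) \<Rightarrow> table \<Rightarrow> nat" where
  "m_psi \<psi> T = (if T = Lambda then 0 else Max {\<psi> [f] | f. f \<in> At T})"

definition annihilating :: "table \<Rightarrow> word \<Rightarrow> bool" where
  "annihilating T \<alpha> \<longleftrightarrow> \<alpha> \<in> Omega2 T \<and> sub T \<alpha> = Lambda \<and>
     \<not> (\<exists>f \<delta> \<sigma>. (f, \<delta>) \<in> set \<alpha> \<and> (f, \<sigma>) \<in> set \<alpha> \<and> \<delta> \<noteq> \<sigma>)"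

definition irreducible_ann :: "table \<Rightarrow> word \<Rightarrow> bool" where
  "irreducible_ann T \<alpha> \<longleftrightarrow> annihilating T \<alpha> \<and>
     \<not> (\<exists>\<beta>. subseq \<beta> \<alpha> \<and> \<beta> \<noteq> \<alpha> \<and> annihilating T \<beta>)"

definition G :: "table \<Rightarrow> nat" where
  "G T = (if T = Lambda then 0
          else if \<exists>\<alpha>. irreducible_ann T \<alpha> then Max {length \<alpha> | \<alpha>. irreducible_ann T \<alpha>}
          else 0)"

text \<open>A_psi(n), G_{psi,A}(n) and H^infty_{psi,A}(n); None means undefined\<close>
definition A_psi :: "(nat list \<Rightarrow> nat) \<Rightarrow> table set \<Rightarrow> nat \<Rightarrow> table set" where
  "A_psi \<psi> A n = {T \<in> A. m_psi \<psi> T \<le> n}"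

definition G_fun :: "(nat list \<Rightarrow> nat) \<Rightarrow> table set \<Rightarrow> nat \<Rightarrow> nat option" where
  "G_fun \<psi> A n = (let S = G ` A_psi \<psi> A n in if finite S then Some (Max S) else None)"

definition H_fun :: "(nat list \<Rightarrow> nat) \<Rightarrow> table set \<Rightarrow> nat \<Rightarrow> nat option" where
  "H_fun \<psi> A n = (let S = {psi_d \<psi> T | T. T \<in> A \<and> psi_a \<psi> T \<le> n}
                   in if finite S then Some (Max S) else None)"

end

theory Submission
  imports Defs "HOL-Library.Infinite_Set"
begin

text \<open>Take \<open>T \<in> A\<close> with \<open>m\<^sub>\<psi>(T) \<le> n\<close> and an irreducible annihilating word \<alpha> of length
  \<open>G(T)\<close>. Deleting the columns outside \<alpha> and letting every row decide the set of attributes at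
  which it contradicts \<alpha> gives a table \<open>Q \<in> [T] \<subseteq> A\<close>. Guessing one contradicted letter is a
  nondeterministic tree of depth one, so \<open>\<psi>\<^sup>a(Q) \<le> m\<^sub>\<psi>(T) \<le> n\<close>. By irreducibility each
  letter has a row contradicting \<alpha> only there, with that single attribute as decision set; an
  adversary answering along \<alpha> keeps two such rows alive until all but one attribute of \<alpha> is
  queried, so \<open>\<psi>\<^sup>d(Q) \<ge> |\<alpha>| - 1\<close> for bounded \<psi>. Unbounded \<open>G\<close> on \<open>A\<^sub>\<psi>(n)\<close> thus gives
  unbounded \<open>\<psi>\<^sup>d\<close> on tables with \<open>\<psi>\<^sup>a \<le> n\<close>.\<close>

lemma sat_Nil [simp]: "sat cs r []"
  by (simp add: sat_def)

lemma sat_append [simp]: "sat cs r (p @ w) \<longleftrightarrow> sat cs r p \<and> sat cs r w"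
  by (simp add: sat_def ball_Un)

lemma sat_Cons [simp]: "sat cs r ((f, \<delta>) # w) \<longleftrightarrow> entry cs r f = \<delta> \<and> sat cs r w"
  by (simp add: sat_def)

lemma sat_mono: "sat cs r w \<Longrightarrow> set p \<subseteq> set w \<Longrightarrow> sat cs r p"
  by (auto simp: sat_def)

lemma set_snd_sub: "set (snd (sub T w)) = {row \<in> set (snd T). sat (fst T) (fst row) w}"
  by (auto simp: sub_def Let_def Lambda_def filter_empty_conv split: prod.splits)

lemma sub_eq_Lambda_iff: "sub T w = Lambda \<longleftrightarrow> (\<forall>row \<in> set (snd T). \<not> sat (fst T) (fst row) w)"
  by (auto simp: sub_def Let_def Lambda_def filter_empty_conv split: prod.splits)

lemma sub_neq_Lambda: "row \<in> set (snd (sub T w)) \<Longrightarrow> sub T w \<noteq> Lambda"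
  by (auto simp: Lambda_def)

lemma sub_cong_set: "set a = set b \<Longrightarrow> sub T a = sub T b"
  by (simp add: sub_def sat_def)

lemma Pi_subset_decisions: "(v, d) \<in> set (snd T) \<Longrightarrow> Pi T \<subseteq> d"
  by (auto simp: Pi_def)

lemma entry_map: "distinct cs \<Longrightarrow> g \<in> set cs \<Longrightarrow> entry cs (map h cs) g = h g"
  by (simp add: entry_def map_of_zip_map)

lemma entry_in_set:
  assumes "length r = length cs" "f \<in> set cs"
  shows "entry cs r f \<in> set r"
proof -
  obtain x where x: "map_of (zip cs r) f = Some x"
    using assms by (metis dom_map_of_zip domD)
  then have "x \<in> set r" by (meson map_of_SomeD set_zip_rightD)
  with x show ?thesis by (simp add: entry_def)
qed

inductive_simps node_path_Leaf_iff [simp]: "node_path (Leaf x) w d"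
inductive_simps node_path_Node_iff [simp]: "node_path (Node f cs) w d"
inductive_simps node_attr_Leaf_iff [simp]: "node_attr (Leaf x) g"
inductive_simps node_attr_Node_iff [simp]: "node_attr (Node f cs) g"
inductive_simps wf_node_Node_iff [simp]: "wf_node (Node f cs)"
inductive_simps det_node_Node_iff [simp]: "det_node (Node f cs)"

lemma wf_node_has_path: "wf_node c \<Longrightarrow> \<exists>w d. node_path c w d"
proof (induction rule: wf_node.induct)
  case (2 cs f)
  then obtain \<delta> c where "(\<delta>, c) \<in> set cs" by (cases cs) auto
  with 2 show ?case by fastforce
qed simp

lemma finite_node_paths: "finite {(w, d). node_path c w d}"
proof (induction c)
  case (Leaf x)
  then show ?case by simp
next
  case (Node f cs)
  have "{(w, d). node_path (Node f cs) w d}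
      = (\<Union>(\<delta>, c) \<in> set cs. (\<lambda>(w, d). ((f, \<delta>) # w, d)) ` {(w, d). node_path c w d})"
    by fastforce
  moreover have "finite {(w, d). node_path c w d}" if "(\<delta>, c) \<in> set cs" for \<delta> c
    using Node.IH that by (simp add: snds.intros)
  ultimately show ?case by auto
qed

lemma finite_psi_words: "finite {psi_word \<psi> w | w d. tree_path \<Gamma> w d}"
proof -
  have "{psi_word \<psi> w | w d. tree_path \<Gamma> w d}
      = (\<lambda>(w, d). psi_word \<psi> w) ` (\<Union>c \<in> set \<Gamma>. {(w, d). node_path c w d})"
    by (auto simp: tree_path_def)
  then show ?thesis by (simp add: finite_node_paths)
qed

lemma psi_word_le_psi_tree: "tree_path \<Gamma> w d \<Longrightarrow> psi_word \<psi> w \<le> psi_tree \<psi> \<Gamma>"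
  unfolding psi_tree_def by (rule Max_ge[OF finite_psi_words]) blast

lemma psi_tree_le:
  assumes "\<And>w d. tree_path \<Gamma> w d \<Longrightarrow> psi_word \<psi> w \<le> k" "tree_path \<Gamma> w0 d0"
  shows "psi_tree \<psi> \<Gamma> \<le> k"
  unfolding psi_tree_def using assms finite_psi_words by (subst Max_le_iff) auto

lemma psi_a_le_psi_tree: "nondet_tree_for T \<Gamma> \<Longrightarrow> psi_a \<psi> T \<le> psi_tree \<psi> \<Gamma>"
  unfolding psi_a_def by (auto intro: Least_le)

lemma psi_d_attained:
  assumes "T \<noteq> Lambda" "det_tree_for T \<Gamma>\<^sub>0"
  obtains \<Gamma> where "det_tree_for T \<Gamma>" "psi_tree \<psi> \<Gamma> = psi_d \<psi> T"
proof -
  have "\<exists>\<Gamma>. det_tree_for T \<Gamma> \<and> psi_tree \<psi> \<Gamma> = psi_d \<psi> T"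
    unfolding psi_d_def using assms by simp (rule LeastI_ex, blast)
  with that show thesis by blast
qed

lemma set_snd_Jrep: "set (snd (Jrep \<nu> T)) = (\<lambda>v. (v, \<nu> v)) ` fst ` set (snd T)"
  by (force simp: Jrep_def)

lemma fst_Jrep [simp]: "fst (Jrep \<nu> T) = fst T"
  by (simp add: Jrep_def)

lemma fst_Idel:
  "filter (\<lambda>f. f \<notin> D) (fst T) \<noteq> [] \<Longrightarrow> fst (Idel D T) = filter (\<lambda>f. f \<notin> D) (fst T)"
  by (simp add: Idel_def Let_def)

lemma Idel_row_values:
  assumes "filter (\<lambda>f. f \<notin> D) (fst T) \<noteq> []"
  shows "fst ` set (snd (Idel D T))
       = (\<lambda>r. map (entry (fst T) r) (filter (\<lambda>f. f \<notin> D) (fst T))) ` fst ` set (snd T)"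
proof -
  define rs where "rs = snd T"
  define pr where "pr = (\<lambda>r. map (entry (fst T) r) (filter (\<lambda>f. f \<notin> D) (fst T)))"
  have rows: "snd (Idel D T) = [(pr (fst (rs ! i)), snd (rs ! i)).
      i \<leftarrow> [0..<length rs], \<forall>k<i. pr (fst (rs ! k)) \<noteq> pr (fst (rs ! i))]"
    using assms unfolding Idel_def Let_def by (simp add: pr_def rs_def cong: if_cong)
  have "pr ` fst ` set rs \<subseteq> fst ` set (snd (Idel D T))"
  proof
    fix v assume "v \<in> pr ` fst ` set rs"
    then obtain i where i: "i < length rs" "pr (fst (rs ! i)) = v"
      by (auto simp: in_set_conv_nth)
    \<comment> \<open>the first row with the same projection is the one kept by I\<close>
    define j where "j = (LEAST j. pr (fst (rs ! j)) = v)"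
    have j: "pr (fst (rs ! j)) = v" "j \<le> i"
      unfolding j_def by (rule LeastI[of _ i], simp add: i(2)) (rule Least_le, simp add: i(2))
    have first: "\<forall>k<j. pr (fst (rs ! k)) \<noteq> pr (fst (rs ! j))"
      using not_less_Least j(1) unfolding j_def by fastforce
    have mem: "\<And>P g. j < length rs \<Longrightarrow> P j \<Longrightarrow> g j \<in> set [g i. i \<leftarrow> [0..<length rs], P i]"
      by auto
    have "(pr (fst (rs ! j)), snd (rs ! j)) \<in> set (snd (Idel D T))"
      unfolding rows
      by (rule mem[of "\<lambda>i. \<forall>k<i. pr (fst (rs ! k)) \<noteq> pr (fst (rs ! i))"
                     "\<lambda>i. (pr (fst (rs ! i)), snd (rs ! i))"])
         (use i(1) j(2) first in auto)
    then show "v \<in> fst ` set (snd (Idel D T))"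
      using j(1) by force
  qed
  moreover have "fst ` set (snd (Idel D T)) \<subseteq> pr ` fst ` set rs"
    unfolding rows by auto
  ultimately have "fst ` set (snd (Idel D T)) = pr ` fst ` set rs" by blast
  then show ?thesis by (simp only: pr_def rs_def)
qed

lemma subseq_remdups: "subseq (remdups xs) xs"
  by (induction xs) auto

lemma annihilating_subset:
  assumes "annihilating T \<alpha>" "set \<beta> \<subseteq> set \<alpha>" "sub T \<beta> = Lambda"
  shows "annihilating T \<beta>"
  using assms unfolding annihilating_def Omega2_def by blast

lemma irreducible_annD:
  assumes "irreducible_ann T \<alpha>"
  shows "annihilating T \<alpha>" "\<And>\<beta>. subseq \<beta> \<alpha> \<Longrightarrow> \<beta> \<noteq> \<alpha> \<Longrightarrow> \<not> annihilating T \<beta>"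
  using assms unfolding irreducible_ann_def by blast+

lemma irreducible_ann_letter:
  "irreducible_ann T \<alpha> \<Longrightarrow> (f, \<delta>) \<in> set \<alpha> \<Longrightarrow> f \<in> At T \<and> \<delta> \<in> {0, 1}"
  by (drule irreducible_annD(1)) (auto simp: annihilating_def Omega2_def)

lemma irreducible_ann_sub: "irreducible_ann T \<alpha> \<Longrightarrow> sub T \<alpha> = Lambda"
  by (drule irreducible_annD(1)) (simp add: annihilating_def)

lemma irreducible_ann_consistent:
  "irreducible_ann T \<alpha> \<Longrightarrow> (f, \<delta>) \<in> set \<alpha> \<Longrightarrow> (f, \<sigma>) \<in> set \<alpha> \<Longrightarrow> \<delta> = \<sigma>"
  by (drule irreducible_annD(1)) (auto simp: annihilating_def)

lemma irreducible_ann_distinct_attrs: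
  assumes "irreducible_ann T \<alpha>"
  shows "distinct (map fst \<alpha>)"
proof -
  have "distinct \<alpha>"
  proof (rule ccontr)
    assume "\<not> distinct \<alpha>"
    then have "remdups \<alpha> \<noteq> \<alpha>" by (metis distinct_remdups)
    moreover have "subseq (remdups \<alpha>) \<alpha>" by (rule subseq_remdups)
    moreover have "annihilating T (remdups \<alpha>)"
      using irreducible_ann_sub[OF assms] sub_cong_set[of "remdups \<alpha>" \<alpha> T]
      by (intro annihilating_subset[OF irreducible_annD(1)[OF assms]]) simp_all
    ultimately show False using irreducible_annD(2)[OF assms] by blast
  qed
  moreover have "inj_on fst (set \<alpha>)"
    using irreducible_ann_consistent[OF assms] by (fastforce simp: inj_on_def)
  ultimately show ?thesis by (simp add: distinct_map)
qed

lemma irreducible_ann_drop_attr: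
  assumes "irreducible_ann T \<alpha>" "f \<in> fst ` set \<alpha>"
  shows "sub T (filter (\<lambda>x. fst x \<noteq> f) \<alpha>) \<noteq> Lambda"
proof
  let ?\<beta> = "filter (\<lambda>x. fst x \<noteq> f) \<alpha>"
  assume "sub T ?\<beta> = Lambda"
  then have "annihilating T ?\<beta>"
    by (intro annihilating_subset[OF irreducible_annD(1)[OF assms(1)]]) auto
  moreover have "?\<beta> \<noteq> \<alpha>" using assms(2) by (auto simp: filter_id_conv)
  ultimately show False using irreducible_annD(2)[OF assms(1)] by simp
qed

lemma length_irreducible_ann_le:
  assumes "irreducible_ann T \<alpha>"
  shows "length \<alpha> \<le> card (At T)"
proof -
  have "length \<alpha> = card (fst ` set \<alpha>)"
    using irreducible_ann_distinct_attrs[OF assms] by (metis distinct_card length_map set_map)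
  also have "\<dots> \<le> card (At T)"
    by (rule card_mono) (auto simp: At_def dest: irreducible_ann_letter[OF assms])
  finally show ?thesis .
qed

lemma G_attained:
  assumes "0 < G T"
  obtains \<alpha> where "irreducible_ann T \<alpha>" "length \<alpha> = G T"
proof -
  let ?L = "{length \<alpha> | \<alpha>. irreducible_ann T \<alpha>}"
  have ex: "\<exists>\<alpha>. irreducible_ann T \<alpha>" and G: "G T = Max ?L"
    using assms by (auto simp: G_def split: if_splits)
  have "finite ?L"
    by (rule finite_subset[of _ "{..card (At T)}"]) (auto dest: length_irreducible_ann_le)
  moreover have "?L \<noteq> {}" using ex by blast
  ultimately have "G T \<in> ?L" unfolding G by (rule Max_in)
  then show thesis using that by fastforce
qed

section \<open>An adversary lower bound for deterministic trees\<close>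

lemma det_node_follow_child:
  assumes "distinct (map fst cs)" "(\<delta>, c) \<in> set cs"
    and "node_path (Node h cs) w d" "sat cols v w" "entry cols v h = \<delta>"
  shows "\<exists>w'. node_path c w' d \<and> sat cols v w'"
proof -
  obtain \<delta>' c' w' where w: "w = (h, \<delta>') # w'" "(\<delta>', c') \<in> set cs" "node_path c' w' d"
    using assms(3) by auto
  then have "\<delta>' = \<delta>" using assms(4,5) by simp
  then have "c' = c" using eq_key_imp_eq_value[OF assms(1)] w(2) assms(2) by blast
  with w assms(4) show ?thesis by auto
qed

context
  fixes Q :: table and \<alpha> :: word
  assumes witness_rows: "\<And>f. f \<in> fst ` set \<alpha> \<Longrightarrow>
    \<exists>v. (v, {f}) \<in> set (snd Q) \<and> sat (fst Q) v (filter (\<lambda>x. fst x \<noteq> f) \<alpha>)"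
begin

lemma witness_row_sat:
  assumes "f \<in> fst ` set \<alpha>" "set p \<subseteq> set \<alpha>" "f \<notin> fst ` set p"
  obtains v where "(v, {f}) \<in> set (snd Q)" "sat (fst Q) v p"
proof -
  obtain v where v: "(v, {f}) \<in> set (snd Q)" "sat (fst Q) v (filter (\<lambda>x. fst x \<noteq> f) \<alpha>)"
    using witness_rows assms(1) by blast
  have "set p \<subseteq> set (filter (\<lambda>x. fst x \<noteq> f) \<alpha>)" using assms(2,3) by force
  with v show thesis using that sat_mono by blast
qed

lemma decided_prefix_card_le:
  assumes "set p \<subseteq> set \<alpha>" "sub Q p = Lambda \<or> d \<in> Pi (sub Q p)"
  shows "card (fst ` set \<alpha> - fst ` set p) \<le> 1"
proof (rule ccontr)
  assume "\<not> card (fst ` set \<alpha> - fst ` set p) \<le> 1"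
  then obtain f f' where ff: "f \<in> fst ` set \<alpha>" "f' \<in> fst ` set \<alpha>"
    "f \<notin> fst ` set p" "f' \<notin> fst ` set p" "f \<noteq> f'"
    by (auto simp: card_le_Suc0_iff_eq)
  obtain v where v: "(v, {f}) \<in> set (snd Q)" "sat (fst Q) v p"
    using witness_row_sat ff(1,3) assms(1) by blast
  obtain v' where v': "(v', {f'}) \<in> set (snd Q)" "sat (fst Q) v' p"
    using witness_row_sat ff(2,4) assms(1) by blast
  have rows: "(v, {f}) \<in> set (snd (sub Q p))" "(v', {f'}) \<in> set (snd (sub Q p))"
    using v v' by (auto simp: set_snd_sub)
  then have "d \<in> Pi (sub Q p)" using assms(2) sub_neq_Lambda by blast
  then show False using Pi_subset_decisions[OF rows(1)] Pi_subset_decisions[OF rows(2)] ff(5)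
    by blast
qed

lemma adversary_edge:
  assumes "h \<in> fst ` set \<alpha>" "set p \<subseteq> set \<alpha>" "\<not> card (fst ` set \<alpha> - fst ` set p) \<le> 1"
    and "\<And>v d. (v, d) \<in> set (snd Q) \<Longrightarrow> sat (fst Q) v p \<Longrightarrow>
      \<exists>w e. node_path (Node h cs) w e \<and> sat (fst Q) v w"
  obtains \<delta> c where "(h, \<delta>) \<in> set \<alpha>" "(\<delta>, c) \<in> set cs"
proof -
  obtain f0 where f0: "f0 \<in> fst ` set \<alpha>" "f0 \<notin> fst ` set p" "f0 \<noteq> h"
    using assms(3) by (auto simp: card_le_Suc0_iff_eq)
  obtain \<delta> where h: "(h, \<delta>) \<in> set \<alpha>" using assms(1) by force
  obtain v where v: "(v, {f0}) \<in> set (snd Q)" "sat (fst Q) v (filter (\<lambda>x. fst x \<noteq> f0) \<alpha>)"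
    using witness_rows f0(1) by blast
  have "set (p @ [(h, \<delta>)]) \<subseteq> set (filter (\<lambda>x. fst x \<noteq> f0) \<alpha>)"
    using assms(2) f0(2,3) h by force
  then have sat_v: "sat (fst Q) v (p @ [(h, \<delta>)])" using v(2) sat_mono by blast
  then have "sat (fst Q) v p" by simp
  then obtain w e where "node_path (Node h cs) w e" "sat (fst Q) v w"
    using assms(4)[OF v(1)] by blast
  then obtain c where "(\<delta>, c) \<in> set cs" using sat_v by auto
  with h show thesis by (rule that)
qed

text \<open>Adversary argument: answer every query along \<alpha>. As long as two attributes of \<alpha> are
  unqueried, their witness rows (with the distinct singleton decisions) both survive, so no leaf
  can be reached.\<close>

lemma det_node_long_path:
  "det_node c \<Longrightarrow> wf_node c \<Longrightarrow> (\<And>g. node_attr c g \<Longrightarrow> g \<in> fst ` set \<alpha>) \<Longrightarrow> set p \<subseteq> set \<alpha>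
   \<Longrightarrow> (\<And>v d. (v, d) \<in> set (snd Q) \<Longrightarrow> sat (fst Q) v p \<Longrightarrow> \<exists>w e. node_path c w e \<and> sat (fst Q) v w)
   \<Longrightarrow> (\<And>w e. node_path c w e \<Longrightarrow> sub Q (p @ w) = Lambda \<or> e \<in> Pi (sub Q (p @ w)))
   \<Longrightarrow> \<exists>w e. node_path c w e \<and> card (fst ` set \<alpha> - fst ` set (p @ w)) \<le> 1"
proof (induction c arbitrary: p rule: det_node.induct)
  case (1 d)
  then show ?case using decided_prefix_card_le[of p d] by simp
next
  case (2 cs h)
  show ?case
  proof (cases "card (fst ` set \<alpha> - fst ` set p) \<le> 1")
    case True
    obtain w d where "node_path (Node h cs) w d" using wf_node_has_path[OF "2.prems"(1)] by blast
    moreover have "card (fst ` set \<alpha> - fst ` set (p @ w)) \<le> card (fst ` set \<alpha> - fst ` set p)"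
      by (rule card_mono) auto
    ultimately show ?thesis using True by force
  next
    case False
    have "h \<in> fst ` set \<alpha>" using "2.prems"(2) by simp
    then obtain \<delta> c where h: "(h, \<delta>) \<in> set \<alpha>" and c: "(\<delta>, c) \<in> set cs"
      by (rule adversary_edge[OF _ "2.prems"(3) False "2.prems"(4)])
    let ?p' = "p @ [(h, \<delta>)]"
    have "\<exists>w e. node_path c w e \<and> card (fst ` set \<alpha> - fst ` set (?p' @ w)) \<le> 1"
    proof (rule "2.IH"[OF c])
      show "wf_node c" using "2.prems"(1) c by auto
      show "\<And>g. node_attr c g \<Longrightarrow> g \<in> fst ` set \<alpha>" using "2.prems"(2) c by auto
      show "set ?p' \<subseteq> set \<alpha>" using "2.prems"(3) h by simp
      show "\<exists>w e. node_path c w e \<and> sat (fst Q) u w"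
        if row: "(u, e) \<in> set (snd Q)" and sat_u: "sat (fst Q) u ?p'" for u e
      proof -
        have "sat (fst Q) u p" using sat_u by simp
        then obtain w e where "node_path (Node h cs) w e" "sat (fst Q) u w"
          using "2.prems"(4)[OF row] by blast
        moreover have "entry (fst Q) u h = \<delta>" using sat_u by simp
        ultimately show ?thesis using det_node_follow_child[OF "2.hyps"(1) c] by blast
      qed
      show "sub Q (?p' @ w) = Lambda \<or> e \<in> Pi (sub Q (?p' @ w))" if "node_path c w e" for w e
        using "2.prems"(5)[of "(h, \<delta>) # w" e] that c by auto
    qed
    then obtain w e where "node_path c w e" "card (fst ` set \<alpha> - fst ` set (?p' @ w)) \<le> 1"
      by blast
    then show ?thesis using c by (intro exI[of _ "(h, \<delta>) # w"] exI[of _ e]) auto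
  qed
qed

lemma det_tree_attrs_card_le:
  assumes "det_tree_for Q \<Gamma>" "At Q \<subseteq> fst ` set \<alpha>" "bounded_measure \<psi>"
  shows "card (fst ` set \<alpha>) \<le> psi_tree \<psi> \<Gamma> + 1"
proof -
  obtain c where \<Gamma>: "\<Gamma> = [c]"
    using assms(1) unfolding det_tree_for_def by (auto simp: length_Suc_conv)
  have nd: "nondet_tree_for Q [c]" and "det_node c"
    using assms(1) \<Gamma> unfolding det_tree_for_def by auto
  have "\<exists>w e. node_path c w e \<and> card (fst ` set \<alpha> - fst ` set ([] @ w)) \<le> 1"
  proof (rule det_node_long_path)
    show "det_node c" by fact
    show "wf_node c" using nd unfolding nondet_tree_for_def wf_tree_def by simp
    show "g \<in> fst ` set \<alpha>" if "node_attr c g" for g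
      using nd that assms(2) unfolding nondet_tree_for_def tree_At_def by auto
    show "\<exists>w e. node_path c w e \<and> sat (fst Q) v w" if "(v, d) \<in> set (snd Q)" for v d
      using nd that unfolding nondet_tree_for_def tree_path_def by (fastforce simp: set_snd_sub)
    show "sub Q ([] @ w) = Lambda \<or> e \<in> Pi (sub Q ([] @ w))" if "node_path c w e" for w e
      using nd that unfolding nondet_tree_for_def tree_path_def by simp
  qed simp
  then obtain w e where path: "node_path c w e" and "card (fst ` set \<alpha> - set (map fst w)) \<le> 1"
    by auto
  have "card (fst ` set \<alpha>) \<le> card ((fst ` set \<alpha> - set (map fst w)) \<union> set (map fst w))"
    by (rule card_mono) auto
  also have "\<dots> \<le> card (fst ` set \<alpha> - set (map fst w)) + card (set (map fst w))"
    by (rule card_Un_le)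
  also have "\<dots> \<le> 1 + length (map fst w)"
    using \<open>card (fst ` set \<alpha> - set (map fst w)) \<le> 1\<close> card_length[of "map fst w"] by linarith
  also have "\<dots> \<le> 1 + \<psi> (map fst w)"
    using assms(3) unfolding bounded_measure_def by (simp only: add_le_cancel_left)
  also have "\<dots> \<le> 1 + psi_tree \<psi> \<Gamma>"
    using psi_word_le_psi_tree[of \<Gamma> w e \<psi>] path \<Gamma> by (simp add: tree_path_def psi_word_def)
  finally show ?thesis by simp
qed

end

section \<open>Trees that look for a contradicted letter\<close>

definition flip_tree :: "word \<Rightarrow> dtree" where
  "flip_tree \<alpha> = map (\<lambda>(f, \<delta>). Node f [(1 - \<delta>, Leaf f)]) \<alpha>"

text \<open>The final leaf of the chain is reached only by rows satisfying the whole word, so its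
  decision is irrelevant once the word annihilates the table.\<close>

fun flip_chain :: "word \<Rightarrow> dnode" where
  "flip_chain [] = Leaf 0"
| "flip_chain ((f, \<delta>) # \<alpha>) = Node f [(1 - \<delta>, Leaf f), (\<delta>, flip_chain \<alpha>)]"

lemma tree_path_flip_tree:
  "tree_path (flip_tree \<alpha>) w d \<longleftrightarrow> (\<exists>\<delta>. (d, \<delta>) \<in> set \<alpha> \<and> w = [(d, 1 - \<delta>)])"
proof
  show "tree_path (flip_tree \<alpha>) w d \<Longrightarrow> \<exists>\<delta>. (d, \<delta>) \<in> set \<alpha> \<and> w = [(d, 1 - \<delta>)]"
    by (auto simp: tree_path_def flip_tree_def)
  assume "\<exists>\<delta>. (d, \<delta>) \<in> set \<alpha> \<and> w = [(d, 1 - \<delta>)]"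
  then obtain \<delta> where "(d, \<delta>) \<in> set \<alpha>" "w = [(d, 1 - \<delta>)]" by blast
  moreover from this(1) have "Node d [(1 - \<delta>, Leaf d)] \<in> set (flip_tree \<alpha>)"
    unfolding flip_tree_def by (auto intro: image_eqI[where x = "(d, \<delta>)"])
  moreover have "node_path (Node d [(1 - \<delta>, Leaf d)]) [(d, 1 - \<delta>)] d" by simp
  ultimately show "tree_path (flip_tree \<alpha>) w d" unfolding tree_path_def by blast
qed

lemma tree_At_flip_tree: "tree_At (flip_tree \<alpha>) = fst ` set \<alpha>"
  by (force simp: tree_At_def flip_tree_def)

lemma psi_tree_flip_tree_le:
  assumes "\<alpha> \<noteq> []" "\<And>f. f \<in> fst ` set \<alpha> \<Longrightarrow> \<psi> [f] \<le> k"
  shows "psi_tree \<psi> (flip_tree \<alpha>) \<le> k"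
proof -
  obtain f \<delta> where "(f, \<delta>) \<in> set \<alpha>" using assms(1) by (cases \<alpha>) auto
  then have "tree_path (flip_tree \<alpha>) [(f, 1 - \<delta>)] f" by (auto simp: tree_path_flip_tree)
  then show ?thesis
  proof (rule psi_tree_le[rotated])
    show "psi_word \<psi> w \<le> k" if "tree_path (flip_tree \<alpha>) w d" for w d
      using that by (auto simp: tree_path_flip_tree psi_word_def intro!: assms(2) rev_image_eqI)
  qed
qed

lemma flip_chain_wf:
  "(\<And>f \<delta>. (f, \<delta>) \<in> set \<alpha> \<Longrightarrow> \<delta> \<in> {0, 1}) \<Longrightarrow> wf_node (flip_chain \<alpha>) \<and> det_node (flip_chain \<alpha>)"
proof (induction \<alpha> rule: flip_chain.induct)
  case (2 f \<delta> \<alpha>)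
  then have "1 - \<delta> \<noteq> \<delta>" "\<delta> \<in> {0, 1}" by fastforce+
  with 2 show ?case by (auto intro: wf_node.intros det_node.intros)
qed (auto intro: wf_node.intros det_node.intros)

lemma node_attr_flip_chain: "node_attr (flip_chain \<alpha>) g \<Longrightarrow> g \<in> fst ` set \<alpha>"
  by (induction \<alpha> rule: flip_chain.induct) auto

lemma node_path_flip_chain:
  "node_path (flip_chain \<alpha>) w d \<Longrightarrow>
    w = \<alpha> \<or> (\<exists>a f \<delta> b. \<alpha> = a @ (f, \<delta>) # b \<and> w = a @ [(f, 1 - \<delta>)] \<and> d = f)"
proof (induction \<alpha> arbitrary: w rule: flip_chain.induct)
  case (2 f \<delta> \<alpha>)
  then consider "w = [(f, 1 - \<delta>)]" "d = f" | w' where "w = (f, \<delta>) # w'" "node_path (flip_chain \<alpha>) w' d"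
    by auto
  then show ?case
  proof cases
    case 1
    then show ?thesis by (metis append_Nil)
  next
    case (2 w')
    then show ?thesis using "2.IH"[OF 2(2)] by (metis append_Cons)
  qed
qed simp

lemma flip_chain_covers:
  assumes "\<And>f \<delta>. (f, \<delta>) \<in> set \<alpha> \<Longrightarrow> entry cols v f \<in> {0, 1} \<and> \<delta> \<in> {0, 1}" "\<not> sat cols v \<alpha>"
  shows "\<exists>w d. node_path (flip_chain \<alpha>) w d \<and> sat cols v w"
  using assms
proof (induction \<alpha> rule: flip_chain.induct)
  case (2 f \<delta> \<alpha>)
  show ?case
  proof (cases "entry cols v f = \<delta>")
    case True
    with "2.prems" "2.IH" obtain w d where "node_path (flip_chain \<alpha>) w d" "sat cols v w"
      by auto
    with True show ?thesis by (intro exI[of _ "(f, \<delta>) # w"]) auto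
  next
    case False
    then have "entry cols v f = 1 - \<delta>" using "2.prems"(1)[of f \<delta>] by auto
    then show ?thesis by (intro exI[of _ "[(f, 1 - \<delta>)]"] exI[of _ f]) auto
  qed
qed simp

context
  fixes Q :: table and \<alpha> :: word
  assumes letters_binary: "\<And>f \<delta>. (f, \<delta>) \<in> set \<alpha> \<Longrightarrow> \<delta> \<in> {0, 1}"
    and entries_binary: "\<And>v d f. (v, d) \<in> set (snd Q) \<Longrightarrow> f \<in> fst ` set \<alpha> \<Longrightarrow>
      entry (fst Q) v f \<in> {0, 1}"
    and annihilates: "sub Q \<alpha> = Lambda"
    and attrs_in: "fst ` set \<alpha> \<subseteq> At Q"
    and flip_decides: "\<And>f \<delta> w. (f, \<delta>) \<in> set \<alpha> \<Longrightarrow> (f, 1 - \<delta>) \<in> set w \<Longrightarrow>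
      sub Q w = Lambda \<or> f \<in> Pi (sub Q w)"
begin

lemma row_flips_letter:
  assumes "(v, d) \<in> set (snd Q)"
  obtains f \<delta> where "(f, \<delta>) \<in> set \<alpha>" "entry (fst Q) v f = 1 - \<delta>"
proof -
  have "\<not> sat (fst Q) v \<alpha>" using annihilates assms by (auto simp: sub_eq_Lambda_iff)
  then obtain f \<delta> where f: "(f, \<delta>) \<in> set \<alpha>" "entry (fst Q) v f \<noteq> \<delta>"
    by (auto simp: sat_def)
  moreover have "entry (fst Q) v f \<in> {0, 1}" "\<delta> \<in> {0, 1}"
    using entries_binary[OF assms] letters_binary f(1) by force+
  ultimately show thesis using that by force
qed

lemma nondet_tree_for_flip_tree:
  assumes "\<alpha> \<noteq> []"
  shows "nondet_tree_for Q (flip_tree \<alpha>)"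
  unfolding nondet_tree_for_def
proof (intro conjI ballI allI impI)
  show "wf_tree (flip_tree \<alpha>)"
    using assms by (auto simp: wf_tree_def flip_tree_def intro: wf_node.intros)
  show "tree_At (flip_tree \<alpha>) \<subseteq> At Q"
    using attrs_in by (simp add: tree_At_flip_tree)
  show "\<exists>w d. tree_path (flip_tree \<alpha>) w d \<and> row \<in> set (snd (sub Q w))"
    if row: "row \<in> set (snd Q)" for row
  proof -
    obtain f \<delta> where "(f, \<delta>) \<in> set \<alpha>" "entry (fst Q) (fst row) f = 1 - \<delta>"
      by (rule row_flips_letter[of "fst row" "snd row"]) (use row in simp)
    then show ?thesis using row
      by (intro exI[of _ "[(f, 1 - \<delta>)]"] exI[of _ f]) (auto simp: tree_path_flip_tree set_snd_sub)
  qed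
  show "sub Q w = Lambda \<or> d \<in> Pi (sub Q w)" if path: "tree_path (flip_tree \<alpha>) w d" for w d
  proof -
    obtain \<delta> where "(d, \<delta>) \<in> set \<alpha>" "w = [(d, 1 - \<delta>)]"
      using path by (auto simp: tree_path_flip_tree)
    then show ?thesis using flip_decides by simp
  qed
qed

lemma det_tree_for_flip_chain: "det_tree_for Q [flip_chain \<alpha>]"
  unfolding det_tree_for_def nondet_tree_for_def
proof (intro conjI ballI allI impI)
  show "wf_tree [flip_chain \<alpha>]"
    using flip_chain_wf[OF letters_binary] by (simp add: wf_tree_def)
  show "det_node c" if "c \<in> set [flip_chain \<alpha>]" for c
    using flip_chain_wf[OF letters_binary] that by simp
  show "tree_At [flip_chain \<alpha>] \<subseteq> At Q"
    using attrs_in node_attr_flip_chain by (auto simp: tree_At_def)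
  show "\<exists>w d. tree_path [flip_chain \<alpha>] w d \<and> row \<in> set (snd (sub Q w))"
    if row: "row \<in> set (snd Q)" for row
  proof -
    have "\<not> sat (fst Q) (fst row) \<alpha>" using annihilates row by (auto simp: sub_eq_Lambda_iff)
    moreover have "entry (fst Q) (fst row) f \<in> {0, 1} \<and> \<delta> \<in> {0, 1}" if "(f, \<delta>) \<in> set \<alpha>" for f \<delta>
      using entries_binary[of "fst row" "snd row" f] letters_binary[OF that] row that by force
    ultimately obtain w d where "node_path (flip_chain \<alpha>) w d" "sat (fst Q) (fst row) w"
      using flip_chain_covers by blast
    then show ?thesis using row by (auto simp: tree_path_def set_snd_sub)
  qed
  show "sub Q w = Lambda \<or> d \<in> Pi (sub Q w)" if "tree_path [flip_chain \<alpha>] w d" for w d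
  proof -
    have "node_path (flip_chain \<alpha>) w d" using that by (simp add: tree_path_def)
    from node_path_flip_chain[OF this] show ?thesis
    proof (elim disjE exE conjE)
      assume "w = \<alpha>"
      then show ?thesis using annihilates by simp
    next
      fix a f \<delta> b assume "\<alpha> = a @ (f, \<delta>) # b" "w = a @ [(f, 1 - \<delta>)]" "d = f"
      then show ?thesis using flip_decides[of f \<delta> w] by simp
    qed
  qed
qed simp

end

section \<open>The mismatch table\<close>

definition kept_columns :: "table \<Rightarrow> word \<Rightarrow> nat list" where
  "kept_columns T \<alpha> = filter (\<lambda>f. f \<in> fst ` set \<alpha>) (fst T)"

definition kept_values :: "table \<Rightarrow> word \<Rightarrow> nat list \<Rightarrow> nat list" where
  "kept_values T \<alpha> r = map (entry (fst T) r) (kept_columns T \<alpha>)"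

definition mismatches :: "word \<Rightarrow> nat list \<Rightarrow> nat list \<Rightarrow> nat set" where
  "mismatches \<alpha> cols v = {f \<in> fst ` set \<alpha>. (f, entry cols v f) \<notin> set \<alpha>}"

text \<open>This is \<open>J(\<nu>, I(D, T))\<close> with \<open>D\<close> the attributes outside \<alpha> and \<open>\<nu>(v)\<close> the attributes
  at which \<open>v\<close> contradicts \<alpha>. When \<alpha> annihilates \<open>T\<close> every row contradicts \<alpha> somewhere, so
  the dummy decision set \<open>{0}\<close> is never used.\<close>

definition mismatch_table :: "table \<Rightarrow> word \<Rightarrow> table" where
  "mismatch_table T \<alpha> =
     Jrep (\<lambda>v. let M = mismatches \<alpha> (kept_columns T \<alpha>) v in if M = {} then {0} else M)
       (Idel (At T - fst ` set \<alpha>) T)"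

context
  fixes T :: table and \<alpha> :: word
  assumes wf: "wf_table T" and nonempty: "T \<noteq> Lambda" and irr: "irreducible_ann T \<alpha>"
begin

lemma kept_columns_Idel: "filter (\<lambda>f. f \<notin> At T - fst ` set \<alpha>) (fst T) = kept_columns T \<alpha>"
  by (auto simp: kept_columns_def At_def intro: filter_cong)

lemma set_kept_columns: "set (kept_columns T \<alpha>) = fst ` set \<alpha>"
  using irreducible_ann_letter[OF irr] by (force simp: kept_columns_def At_def)

lemma rows_nonempty: "snd T \<noteq> []"
  using wf nonempty by (cases T) (auto simp: wf_table_def Lambda_def)

lemma word_nonempty: "\<alpha> \<noteq> []"
proof
  assume "\<alpha> = []"
  then have "sub T [] = Lambda" using irreducible_ann_sub[OF irr] by simp
  moreover obtain row where "row \<in> set (snd T)" using rows_nonempty by (meson ex_in_conv set_empty)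
  ultimately show False using sub_eq_Lambda_iff sat_Nil by blast
qed

lemma kept_columns_nonempty: "kept_columns T \<alpha> \<noteq> []"
  using set_kept_columns word_nonempty by auto

lemma fst_mismatch_table: "fst (mismatch_table T \<alpha>) = kept_columns T \<alpha>"
  using fst_Idel[of "At T - fst ` set \<alpha>" T, unfolded kept_columns_Idel] kept_columns_nonempty
  by (simp add: mismatch_table_def)

lemma At_mismatch_table: "At (mismatch_table T \<alpha>) = fst ` set \<alpha>"
  by (simp add: At_def fst_mismatch_table set_kept_columns)

lemma entry_kept_values:
  "g \<in> fst ` set \<alpha> \<Longrightarrow> entry (kept_columns T \<alpha>) (kept_values T \<alpha> r) g = entry (fst T) r g"
  using wf set_kept_columns
  by (simp add: kept_values_def entry_map kept_columns_def wf_table_def)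

lemma sat_kept_values:
  "fst ` set w \<subseteq> fst ` set \<alpha> \<Longrightarrow> sat (kept_columns T \<alpha>) (kept_values T \<alpha> r) w \<longleftrightarrow> sat (fst T) r w"
  using entry_kept_values by (force simp: sat_def)

lemma mismatches_nonempty:
  assumes "(r, e) \<in> set (snd T)"
  shows "mismatches \<alpha> (kept_columns T \<alpha>) (kept_values T \<alpha> r) \<noteq> {}"
proof -
  have "\<not> sat (fst T) r \<alpha>"
    using irreducible_ann_sub[OF irr] assms by (force simp: sub_eq_Lambda_iff)
  then obtain f \<delta> where f: "(f, \<delta>) \<in> set \<alpha>" "entry (fst T) r f \<noteq> \<delta>"
    by (auto simp: sat_def)
  then have "(f, entry (fst T) r f) \<notin> set \<alpha>" using irreducible_ann_consistent[OF irr] by blast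
  moreover have "f \<in> fst ` set \<alpha>" using f(1) by force
  ultimately have "f \<in> mismatches \<alpha> (kept_columns T \<alpha>) (kept_values T \<alpha> r)"
    by (simp add: mismatches_def entry_kept_values)
  then show ?thesis by blast
qed

lemma set_snd_mismatch_table:
  "set (snd (mismatch_table T \<alpha>))
     = (\<lambda>v. (v, mismatches \<alpha> (kept_columns T \<alpha>) v)) ` kept_values T \<alpha> ` fst ` set (snd T)"
proof -
  have Idel: "fst ` set (snd (Idel (At T - fst ` set \<alpha>) T)) = kept_values T \<alpha> ` fst ` set (snd T)"
    using Idel_row_values[of "At T - fst ` set \<alpha>" T, unfolded kept_columns_Idel] kept_columns_nonempty
    by (simp add: kept_values_def[abs_def])
  have "mismatches \<alpha> (kept_columns T \<alpha>) v \<noteq> {}" if "v \<in> kept_values T \<alpha> ` fst ` set (snd T)" for v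
    using that mismatches_nonempty by auto
  then show ?thesis
    unfolding mismatch_table_def set_snd_Jrep Idel Let_def by (intro image_cong) auto
qed

lemma mismatch_table_rowE:
  assumes "(v, d) \<in> set (snd (mismatch_table T \<alpha>))"
  obtains r e where "(r, e) \<in> set (snd T)" "v = kept_values T \<alpha> r"
    "d = mismatches \<alpha> (kept_columns T \<alpha>) v"
  using assms unfolding set_snd_mismatch_table by auto

lemma mismatch_table_entry_binary:
  assumes "(v, d) \<in> set (snd (mismatch_table T \<alpha>))" "f \<in> fst ` set \<alpha>"
  shows "entry (fst (mismatch_table T \<alpha>)) v f \<in> {0, 1}"
proof -
  obtain r e where r: "(r, e) \<in> set (snd T)" "v = kept_values T \<alpha> r"
    using assms(1) by (rule mismatch_table_rowE)
  have "f \<in> set (fst T)" using assms(2) set_kept_columns by (auto simp: kept_columns_def)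
  then have "entry (fst T) r f \<in> set r"
    using wf r(1) by (intro entry_in_set) (auto simp: wf_table_def)
  with wf r show ?thesis
    by (auto simp: fst_mismatch_table entry_kept_values[OF assms(2)] wf_table_def)
qed

lemma mismatch_table_annihilated: "sub (mismatch_table T \<alpha>) \<alpha> = Lambda"
  unfolding sub_eq_Lambda_iff
proof
  fix row assume "row \<in> set (snd (mismatch_table T \<alpha>))"
  then obtain r e where r: "(r, e) \<in> set (snd T)" "fst row = kept_values T \<alpha> r"
    by (metis mismatch_table_rowE prod.collapse)
  have "\<not> sat (fst T) r \<alpha>"
    using irreducible_ann_sub[OF irr] r(1) by (force simp: sub_eq_Lambda_iff)
  then show "\<not> sat (fst (mismatch_table T \<alpha>)) (fst row) \<alpha>"
    by (simp add: fst_mismatch_table r(2) sat_kept_values)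
qed

lemma mismatch_table_flip_decides:
  assumes "(f, \<delta>) \<in> set \<alpha>" "(f, 1 - \<delta>) \<in> set w"
  shows "sub (mismatch_table T \<alpha>) w = Lambda \<or> f \<in> Pi (sub (mismatch_table T \<alpha>) w)"
proof -
  have "f \<in> d" if "(v, d) \<in> set (snd (sub (mismatch_table T \<alpha>) w))" for v d
  proof -
    have row: "(v, d) \<in> set (snd (mismatch_table T \<alpha>))" "sat (kept_columns T \<alpha>) v w"
      using that by (auto simp: set_snd_sub fst_mismatch_table)
    then have "entry (kept_columns T \<alpha>) v f = 1 - \<delta>" using assms(2) by (auto simp: sat_def)
    moreover have "\<delta> \<in> {0, 1}" using irreducible_ann_letter[OF irr assms(1)] by simp
    then have "(f, 1 - \<delta>) \<notin> set \<alpha>"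
      using irreducible_ann_consistent[OF irr assms(1)] by fastforce
    moreover have "f \<in> fst ` set \<alpha>" using assms(1) by force
    moreover obtain r e where "d = mismatches \<alpha> (kept_columns T \<alpha>) v"
      using row(1) by (rule mismatch_table_rowE)
    ultimately show "f \<in> d" by (simp add: mismatches_def)
  qed
  then show ?thesis by (auto simp: Pi_def)
qed

lemma mismatch_table_witness_row:
  assumes "f \<in> fst ` set \<alpha>"
  shows "\<exists>v. (v, {f}) \<in> set (snd (mismatch_table T \<alpha>))
    \<and> sat (fst (mismatch_table T \<alpha>)) v (filter (\<lambda>x. fst x \<noteq> f) \<alpha>)"
proof -
  let ?\<beta> = "filter (\<lambda>x. fst x \<noteq> f) \<alpha>"
  obtain r e where r: "(r, e) \<in> set (snd T)" "sat (fst T) r ?\<beta>"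
    using irreducible_ann_drop_attr[OF irr assms] by (auto simp: sub_eq_Lambda_iff)
  let ?v = "kept_values T \<alpha> r"
  have "mismatches \<alpha> (kept_columns T \<alpha>) ?v \<subseteq> {f}"
  proof
    fix g assume g: "g \<in> mismatches \<alpha> (kept_columns T \<alpha>) ?v"
    then have gF: "g \<in> fst ` set \<alpha>" by (simp add: mismatches_def)
    with g have "(g, entry (fst T) r g) \<notin> set \<alpha>" by (simp add: mismatches_def entry_kept_values)
    moreover obtain \<delta> where "(g, \<delta>) \<in> set \<alpha>" using gF by auto
    ultimately show "g \<in> {f}" using r(2) by (auto simp: sat_def)
  qed
  then have "mismatches \<alpha> (kept_columns T \<alpha>) ?v = {f}"
    using mismatches_nonempty[OF r(1)] by blast
  moreover have "sat (kept_columns T \<alpha>) ?v ?\<beta>"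
    using r(2) by (subst sat_kept_values) auto
  moreover have "?v \<in> kept_values T \<alpha> ` fst ` set (snd T)"
    using r(1) by (metis fst_conv image_eqI)
  then have "(?v, mismatches \<alpha> (kept_columns T \<alpha>) ?v) \<in> set (snd (mismatch_table T \<alpha>))"
    unfolding set_snd_mismatch_table by (rule imageI)
  ultimately show ?thesis unfolding fst_mismatch_table by (intro exI[of _ ?v]) simp
qed

lemma mismatch_table_in_closure1: "mismatch_table T \<alpha> \<in> closure1 T"
proof -
  let ?\<nu> = "\<lambda>v. let M = mismatches \<alpha> (kept_columns T \<alpha>) v in if M = {} then {0} else M"
  have "finite (mismatches \<alpha> (kept_columns T \<alpha>) v)" for v
    by (rule finite_subset[of _ "fst ` set \<alpha>"]) (auto simp: mismatches_def)
  then have "?\<nu> v \<noteq> {} \<and> finite (?\<nu> v)" for v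
    by (simp add: Let_def)
  then show ?thesis
    unfolding closure1_def mismatch_table_def
    by (intro CollectI exI[of _ "At T - fst ` set \<alpha>"] exI[of _ ?\<nu>] conjI refl) blast+
qed

lemma psi_a_mismatch_table_le: "psi_a \<psi> (mismatch_table T \<alpha>) \<le> m_psi \<psi> T"
proof -
  have letters: "\<And>f \<delta>. (f, \<delta>) \<in> set \<alpha> \<Longrightarrow> \<delta> \<in> {0, 1}"
    using irreducible_ann_letter[OF irr] by blast
  have "nondet_tree_for (mismatch_table T \<alpha>) (flip_tree \<alpha>)"
    by (rule nondet_tree_for_flip_tree[OF letters mismatch_table_entry_binary
          mismatch_table_annihilated _ mismatch_table_flip_decides word_nonempty])
      (simp_all add: At_mismatch_table)
  then have "psi_a \<psi> (mismatch_table T \<alpha>) \<le> psi_tree \<psi> (flip_tree \<alpha>)"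
    by (rule psi_a_le_psi_tree)
  also have "\<dots> \<le> m_psi \<psi> T"
  proof (rule psi_tree_flip_tree_le[OF word_nonempty])
    fix f assume "f \<in> fst ` set \<alpha>"
    then have "f \<in> At T" using irreducible_ann_letter[OF irr] by force
    then show "\<psi> [f] \<le> m_psi \<psi> T"
      using nonempty by (auto simp: m_psi_def At_def intro!: Max_ge)
  qed
  finally show ?thesis .
qed

lemma length_le_psi_d_mismatch_table:
  assumes "bounded_measure \<psi>"
  shows "length \<alpha> \<le> psi_d \<psi> (mismatch_table T \<alpha>) + 1"
proof -
  have letters: "\<And>f \<delta>. (f, \<delta>) \<in> set \<alpha> \<Longrightarrow> \<delta> \<in> {0, 1}"
    using irreducible_ann_letter[OF irr] by blast
  have "det_tree_for (mismatch_table T \<alpha>) [flip_chain \<alpha>]"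
    by (rule det_tree_for_flip_chain[OF letters mismatch_table_entry_binary
          mismatch_table_annihilated _ mismatch_table_flip_decides])
      (simp_all add: At_mismatch_table)
  moreover have "mismatch_table T \<alpha> \<noteq> Lambda"
    using fst_mismatch_table kept_columns_nonempty by (auto simp: Lambda_def)
  ultimately obtain \<Gamma> where \<Gamma>: "det_tree_for (mismatch_table T \<alpha>) \<Gamma>"
    "psi_tree \<psi> \<Gamma> = psi_d \<psi> (mismatch_table T \<alpha>)"
    using psi_d_attained by blast
  have "card (fst ` set \<alpha>) \<le> psi_d \<psi> (mismatch_table T \<alpha>) + 1"
    using det_tree_attrs_card_le[OF mismatch_table_witness_row \<Gamma>(1) _ assms] \<Gamma>(2)
    by (simp add: At_mismatch_table)
  moreover have "card (fst ` set \<alpha>) = length \<alpha>"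
    using irreducible_ann_distinct_attrs[OF irr] by (metis distinct_card length_map set_map)
  ultimately show ?thesis by simp
qed

end

lemma G_le_psi_d_closure1:
  assumes "wf_table T" "bounded_measure \<psi>" "0 < G T"
  obtains Q where "Q \<in> closure1 T" "psi_a \<psi> Q \<le> m_psi \<psi> T" "G T \<le> psi_d \<psi> Q + 1"
proof -
  obtain \<alpha> where \<alpha>: "irreducible_ann T \<alpha>" "length \<alpha> = G T"
    using G_attained assms(3) by blast
  have "T \<noteq> Lambda" using assms(3) by (auto simp: G_def)
  with assms(1,2) \<alpha> show thesis
    using that mismatch_table_in_closure1 psi_a_mismatch_table_le length_le_psi_d_mismatch_table
    by metis
qed

lemma closed_class_G_le_psi_d:
  assumes "closed_class A" "bounded_measure \<psi>" "T \<in> A" "0 < G T"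
  obtains Q where "Q \<in> A" "psi_a \<psi> Q \<le> m_psi \<psi> T" "G T \<le> psi_d \<psi> Q + 1"
proof -
  have "wf_table T" using assms(1,3) by (auto simp: closed_class_def M2_def)
  then obtain Q where "Q \<in> closure1 T" "psi_a \<psi> Q \<le> m_psi \<psi> T" "G T \<le> psi_d \<psi> Q + 1"
    using assms(2,4) by (elim G_le_psi_d_closure1)
  moreover have "closure1 T \<subseteq> A"
    using assms(1,3) unfolding closed_class_def closure_def by blast
  ultimately show thesis using that by blast
qed

theorem lemma14:
  fixes A :: "table set" and \<psi> :: "nat list \<Rightarrow> nat"
  assumes "closed_class A" and "nontrivial A" and "bounded_measure \<psi>"
    and "\<not> (\<forall>n. G_fun \<psi> A n \<noteq> None)"
  shows "\<not> (\<forall>n. H_fun \<psi> A n \<noteq> None)"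
proof -
  obtain n where "G_fun \<psi> A n = None" using assms(4) by blast
  then have G_unbounded: "infinite (G ` A_psi \<psi> A n)"
    by (simp add: G_fun_def Let_def split: if_splits)
  have "infinite {psi_d \<psi> Q | Q. Q \<in> A \<and> psi_a \<psi> Q \<le> n}"
  proof (rule infinite_nat_iff_unbounded[THEN iffD2], intro allI)
    fix m
    obtain g where "g \<in> G ` A_psi \<psi> A n" "m + 1 < g"
      using G_unbounded unfolding infinite_nat_iff_unbounded by blast
    then obtain T where T: "T \<in> A" "m_psi \<psi> T \<le> n" "m + 1 < G T"
      by (auto simp: A_psi_def)
    have "0 < G T" using T(3) by simp
    with assms(1,3) T(1) obtain Q
      where Q: "Q \<in> A" "psi_a \<psi> Q \<le> m_psi \<psi> T" "G T \<le> psi_d \<psi> Q + 1"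
      by (rule closed_class_G_le_psi_d)
    moreover have "psi_a \<psi> Q \<le> n" using Q(2) T(2) by linarith
    ultimately have "psi_d \<psi> Q \<in> {psi_d \<psi> Q | Q. Q \<in> A \<and> psi_a \<psi> Q \<le> n}" by blast
    moreover have "m < psi_d \<psi> Q" using Q(3) T(3) by linarith
    ultimately show "\<exists>k>m. k \<in> {psi_d \<psi> Q | Q. Q \<in> A \<and> psi_a \<psi> Q \<le> n}" by blast
  qed
  then have "H_fun \<psi> A n = None" by (simp add: H_fun_def)
  then show ?thesis by blast
qed

end
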